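(* The Sex-Equal matching mechanism $SE$ and the Egalitarian Stable matching mechanism $ES$ are symmetric (i.e. $G^*$-symmetric).
   Context: Fix $n\ge 2$, $W=\{1,\dots,n\}$, $M=\{n+1,\dots,2n\}$, $I=W\cup M$. Permutations compose right-to-left. A preference profile is a function $p$ on $I$ assigning to each $x\in W$ a linear order $p(x)$ on $M$ and to each $y\in M$ a linear order $p(y)$ on $W$; $\mathcal{P}$ is the set of preference profiles. For a linear order $R$ on $X$ and $a\in X$, $\mathrm{Rank}_R(a)=|\{b\in X:b\succeq_R a\}|$. A matching is a permutation $\mu$ of $I$ with $\mu(W)=M$, $\mu(M)=W$, $\mu(\mu(z))=z$; $\mathcal{M}$ is the set of matchings. $\mu$ is stable for $p$ if there is no $(x,y)\in W\times M$ with $y\succ_{p(x)}\mu(x)$ and $x\succ_{p(y)}\mu(y)$; $ST(p)$ is the set of matchings stable for $p$. Let $\delta(p,\mu)=\left|\sum_{x\in W}\mathrm{Rank}_{p(x)}(\mu(x))-\sum_{y\in M}\mathrm{Rank}_{p(y)}(\mu(y))\right|$ and $e(p,\mu)=\sum_{x\in W}\mathrm{Rank}_{p(x)}(\mu(x))+\sum_{y\in M}\mathrm{Rank}_{p(y)}(\mu(y))$. $SE(p)=\arg\min_{\mu\in ST(p)}\delta(p,\mu)$ and $ES(p)=\arg\min_{\mu\in ST(p)}e(p,\mu)$. $G^*=\{\varphi\in\mathrm{Sym}(I):\{\varphi(W),\varphi(M)\}=\{W,M\}\}$. For a linear order $R$ on $X\subseteq I$ and $\varphi\in\mathrm{Sym}(I)$,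 $\varphi R$ is the relation on $\varphi(X)$ with $(a,b)\in\varphi R$ iff $(\varphi^{-1}(a),\varphi^{-1}(b))\in R$. For $\varphi\in G^*$, $p^\varphi(z)=\varphi\,p(\varphi^{-1}(z))$; $\mu^\varphi=\varphi\mu\varphi^{-1}$; $S^\varphi=\{\mu^\varphi:\mu\in S\}$. A matching mechanism (correspondence $F$ from $\mathcal{P}$ to $\mathcal{M}$) is symmetric if $F(p^\varphi)=F(p)^\varphi$ for all $p\in\mathcal{P}$, $\varphi\in G^*$. *)

theory Defs
  imports Main "HOL-Combinatorics.Permutations"
begin

definition Wset :: "nat \<Rightarrow> nat set" where "Wset n = {1..n}"
definition Mset :: "nat \<Rightarrow> nat set" where "Mset n = {n+1..2*n}"
definition Iset :: "nat \<Rightarrow> nat set" where "Iset n = Wset n \<union> Mset n"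

(* A linear order R on X is a relation (library notion linear_order_on X R);
   convention: (a,b) \<in> R means "a is weakly preferred to b", i.e. a \<succeq>_R b. *)

definition Rank :: "nat set \<Rightarrow> nat rel \<Rightarrow> nat \<Rightarrow> nat" where
  "Rank X R a = card {b \<in> X. (b, a) \<in> R}"

definition spref :: "nat rel \<Rightarrow> nat \<Rightarrow> nat \<Rightarrow> bool" where
  "spref R a b \<longleftrightarrow> (a, b) \<in> R \<and> a \<noteq> b"

definition profiles :: "nat \<Rightarrow> (nat \<Rightarrow> nat rel) set" where
  "profiles n = {p. (\<forall>x\<in>Wset n. linear_order_on (Mset n) (p x))
                   \<and> (\<forall>y\<in>Mset n. linear_order_on (Wset n) (p y))
                   \<and> (\<forall>z. z \<notin> Iset n \<longrightarrow> p z = {})}"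

definition matchings :: "nat \<Rightarrow> (nat \<Rightarrow> nat) set" where
  "matchings n = {\<mu>. \<mu> permutes Iset n \<and> \<mu> ` Wset n = Mset n \<and> \<mu> ` Mset n = Wset n
                    \<and> (\<forall>z\<in>Iset n. \<mu> (\<mu> z) = z)}"

definition stable :: "nat \<Rightarrow> (nat \<Rightarrow> nat rel) \<Rightarrow> (nat \<Rightarrow> nat) \<Rightarrow> bool" where
  "stable n p \<mu> \<longleftrightarrow> \<not> (\<exists>x\<in>Wset n. \<exists>y\<in>Mset n.
      spref (p x) y (\<mu> x) \<and> spref (p y) x (\<mu> y))"

definition ST :: "nat \<Rightarrow> (nat \<Rightarrow> nat rel) \<Rightarrow> (nat \<Rightarrow> nat) set" where
  "ST n p = {\<mu> \<in> matchings n. stable n p \<mu>}"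

definition wsum :: "nat \<Rightarrow> (nat \<Rightarrow> nat rel) \<Rightarrow> (nat \<Rightarrow> nat) \<Rightarrow> nat" where
  "wsum n p \<mu> = (\<Sum>x\<in>Wset n. Rank (Mset n) (p x) (\<mu> x))"

definition msum :: "nat \<Rightarrow> (nat \<Rightarrow> nat rel) \<Rightarrow> (nat \<Rightarrow> nat) \<Rightarrow> nat" where
  "msum n p \<mu> = (\<Sum>y\<in>Mset n. Rank (Wset n) (p y) (\<mu> y))"

definition delta :: "nat \<Rightarrow> (nat \<Rightarrow> nat rel) \<Rightarrow> (nat \<Rightarrow> nat) \<Rightarrow> int" where
  "delta n p \<mu> = \<bar>int (wsum n p \<mu>) - int (msum n p \<mu>)\<bar>"

definition egal :: "nat \<Rightarrow> (nat \<Rightarrow> nat rel) \<Rightarrow> (nat \<Rightarrow> nat) \<Rightarrow> nat" where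
  "egal n p \<mu> = wsum n p \<mu> + msum n p \<mu>"

definition SE :: "nat \<Rightarrow> (nat \<Rightarrow> nat rel) \<Rightarrow> (nat \<Rightarrow> nat) set" where
  "SE n p = {\<mu> \<in> ST n p. \<forall>\<nu>\<in>ST n p. delta n p \<mu> \<le> delta n p \<nu>}"

definition ES :: "nat \<Rightarrow> (nat \<Rightarrow> nat rel) \<Rightarrow> (nat \<Rightarrow> nat) set" where
  "ES n p = {\<mu> \<in> ST n p. \<forall>\<nu>\<in>ST n p. egal n p \<mu> \<le> egal n p \<nu>}"

definition Gstar :: "nat \<Rightarrow> (nat \<Rightarrow> nat) set" where
  "Gstar n = {\<phi>. \<phi> permutes Iset n \<and> {\<phi> ` Wset n, \<phi> ` Mset n} = {Wset n, Mset n}}"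

definition rel_act :: "(nat \<Rightarrow> nat) \<Rightarrow> nat rel \<Rightarrow> nat rel" where
  "rel_act \<phi> R = {(a, b). (inv \<phi> a, inv \<phi> b) \<in> R}"

definition prof_act :: "(nat \<Rightarrow> nat) \<Rightarrow> (nat \<Rightarrow> nat rel) \<Rightarrow> (nat \<Rightarrow> nat rel)" where
  "prof_act \<phi> p = (\<lambda>z. rel_act \<phi> (p (inv \<phi> z)))"

definition match_act :: "(nat \<Rightarrow> nat) \<Rightarrow> (nat \<Rightarrow> nat) \<Rightarrow> (nat \<Rightarrow> nat)" where
  "match_act \<phi> \<mu> = \<phi> \<circ> \<mu> \<circ> inv \<phi>"

definition symmetric_mech :: "nat \<Rightarrow> ((nat \<Rightarrow> nat rel) \<Rightarrow> (nat \<Rightarrow> nat) set) \<Rightarrow> bool" where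
  "symmetric_mech n F \<longleftrightarrow> (\<forall>p\<in>profiles n. \<forall>\<phi>\<in>Gstar n.
      F (prof_act \<phi> p) = match_act \<phi> ` F p)"

end

theory Submission
  imports Defs
begin

text \<open>An element of \<open>G\<^sup>*\<close> either fixes both sides or swaps them. Relabelling agents by
  \<open>\<phi>\<close> carries stable matchings of \<open>p\<close> bijectively onto stable matchings of \<open>p\<^sup>\<phi>\<close>, and it
  preserves every rank, so the two rank sums are at worst exchanged. The sex-equality cost
  \<open>\<delta>\<close> and the egalitarian cost \<open>e\<close> are symmetric in the two sums, hence invariant, and
  therefore so are their sets of minimisers.\<close>

lemma prof_act_apply: "inj \<phi> \<Longrightarrow> prof_act \<phi> p (\<phi> z) = rel_act \<phi> (p z)"
  by (simp add: prof_act_def)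

lemma match_act_apply: "inj \<phi> \<Longrightarrow> match_act \<phi> \<mu> (\<phi> z) = \<phi> (\<mu> z)"
  by (simp add: match_act_def)

lemma image_match_act: "inj \<phi> \<Longrightarrow> match_act \<phi> \<mu> ` (\<phi> ` A) = \<phi> ` (\<mu> ` A)"
  by (simp add: match_act_def image_comp)

lemma spref_rel_act: "inj \<phi> \<Longrightarrow> spref (rel_act \<phi> R) (\<phi> a) (\<phi> b) \<longleftrightarrow> spref R a b"
  by (auto simp: spref_def rel_act_def dest: injD)

lemma Rank_rel_act:
  assumes "inj \<phi>"
  shows "Rank (\<phi> ` X) (rel_act \<phi> R) (\<phi> a) = Rank X R a"
proof -
  have "{b \<in> \<phi> ` X. (b, \<phi> a) \<in> rel_act \<phi> R} = \<phi> ` {b \<in> X. (b, a) \<in> R}"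
    using assms by (auto simp: rel_act_def)
  then show ?thesis
    using assms by (simp add: Rank_def card_image inj_on_subset)
qed

lemma sum_Rank_act:
  assumes "inj \<phi>"
  shows "(\<Sum>x\<in>\<phi> ` A. Rank (\<phi> ` B) (prof_act \<phi> p x) (match_act \<phi> \<mu> x))
       = (\<Sum>x\<in>A. Rank B (p x) (\<mu> x))"
  using assms
  by (simp add: sum.reindex inj_on_subset prof_act_apply match_act_apply Rank_rel_act)

lemma ex_blocking_pair_act:
  assumes "inj \<phi>"
  shows "(\<exists>x\<in>\<phi> ` A. \<exists>y\<in>\<phi> ` B. spref (prof_act \<phi> p x) y (match_act \<phi> \<mu> x)
                              \<and> spref (prof_act \<phi> p y) x (match_act \<phi> \<mu> y))
     \<longleftrightarrow> (\<exists>x\<in>A. \<exists>y\<in>B. spref (p x) y (\<mu> x) \<and> spref (p y) x (\<mu> y))"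
  using assms by (simp add: prof_act_apply match_act_apply spref_rel_act)

lemma prof_act_inv_cancel: "bij \<phi> \<Longrightarrow> prof_act (inv \<phi>) (prof_act \<phi> p) = p"
  by (simp add: prof_act_def rel_act_def inv_inv_eq bij_is_inj)

lemma match_act_inv_cancel: "bij \<phi> \<Longrightarrow> match_act \<phi> (match_act (inv \<phi>) \<nu>) = \<nu>"
  by (auto simp: match_act_def inv_inv_eq bij_is_surj surj_f_inv_f)

lemma argmin_image:
  fixes v :: "'a \<Rightarrow> 'c::linorder"
  assumes "\<And>\<mu>. v' (g \<mu>) = v \<mu>"
  shows "{\<mu> \<in> g ` S. \<forall>\<nu>\<in>g ` S. v' \<mu> \<le> v' \<nu>} = g ` {\<mu> \<in> S. \<forall>\<nu>\<in>S. v \<mu> \<le> v \<nu>}"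
  using assms by auto

lemma Gstar_permutes: "\<phi> \<in> Gstar n \<Longrightarrow> \<phi> permutes Iset n"
  by (simp add: Gstar_def)

lemma Gstar_inj: "\<phi> \<in> Gstar n \<Longrightarrow> inj \<phi>"
  by (blast intro: Gstar_permutes permutes_inj)

lemma Gstar_cases:
  assumes "\<phi> \<in> Gstar n"
  obtains "\<phi> ` Wset n = Wset n" "\<phi> ` Mset n = Mset n"
        | "\<phi> ` Wset n = Mset n" "\<phi> ` Mset n = Wset n"
  using assms unfolding Gstar_def by (auto simp: doubleton_eq_iff)

lemma Gstar_inv:
  assumes "\<phi> \<in> Gstar n"
  shows "inv \<phi> \<in> Gstar n"
proof -
  have perm: "\<phi> permutes Iset n"
    using assms by (rule Gstar_permutes)
  then have inv_image: "inv \<phi> ` (\<phi> ` A) = A" for A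
    by (simp add: permutes_inj image_inv_f_f)
  have "{inv \<phi> ` Wset n, inv \<phi> ` Mset n} = {Wset n, Mset n}"
    using assms
  proof (cases rule: Gstar_cases)
    case 1
    then show ?thesis
      using inv_image[of "Wset n"] inv_image[of "Mset n"] by simp
  next
    case 2
    then show ?thesis
      using inv_image[of "Wset n"] inv_image[of "Mset n"] by auto
  qed
  with perm show ?thesis
    by (simp add: Gstar_def permutes_inv)
qed

lemma Iset_image_Gstar: "\<phi> \<in> Gstar n \<Longrightarrow> \<phi> ` Iset n = Iset n"
  by (simp add: Gstar_permutes permutes_image)

lemma matchings_match_act:
  assumes \<phi>: "\<phi> \<in> Gstar n" and \<mu>: "\<mu> \<in> matchings n"
  shows "match_act \<phi> \<mu> \<in> matchings n"
proof -
  have perm: "\<phi> permutes Iset n"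
    using \<phi> by (rule Gstar_permutes)
  then have inj: "inj \<phi>"
    by (rule permutes_inj)
  have \<mu>_perm: "\<mu> permutes Iset n" and sides: "\<mu> ` Wset n = Mset n" "\<mu> ` Mset n = Wset n"
    using \<mu> by (simp_all add: matchings_def)
  have "match_act \<phi> \<mu> permutes Iset n"
    unfolding match_act_def by (intro permutes_compose permutes_inv \<mu>_perm perm)
  moreover have "match_act \<phi> \<mu> ` Wset n = Mset n \<and> match_act \<phi> \<mu> ` Mset n = Wset n"
    using \<phi> image_match_act[OF inj, of \<mu> "Wset n"] image_match_act[OF inj, of \<mu> "Mset n"]
    by (cases rule: Gstar_cases) (simp_all add: sides)
  moreover have "match_act \<phi> \<mu> (match_act \<phi> \<mu> z) = z" if "z \<in> Iset n" for z
  proof -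
    from that have "z \<in> \<phi> ` Iset n"
      by (simp add: Iset_image_Gstar[OF \<phi>])
    then obtain w where "w \<in> Iset n" "z = \<phi> w" ..
    then show ?thesis
      using \<mu> inj by (simp add: match_act_apply matchings_def)
  qed
  ultimately show ?thesis
    by (simp add: matchings_def)
qed

lemma stable_match_act:
  assumes \<phi>: "\<phi> \<in> Gstar n" and stable: "stable n p \<mu>"
  shows "stable n (prof_act \<phi> p) (match_act \<phi> \<mu>)"
proof -
  have inj: "inj \<phi>"
    using \<phi> by (rule Gstar_inj)
  from \<phi> show ?thesis
  proof (cases rule: Gstar_cases)
    case 1
    then show ?thesis
      using stable ex_blocking_pair_act[OF inj, where A = "Wset n" and B = "Mset n"]
      by (simp add: stable_def)
  next
    case 2
    have "\<not> (\<exists>y\<in>Mset n. \<exists>x\<in>Wset n. spref (p y) x (\<mu> y) \<and> spref (p x) y (\<mu> x))"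
      using stable by (auto simp: stable_def)
    with 2 show ?thesis
      using ex_blocking_pair_act[OF inj, where A = "Mset n" and B = "Wset n"]
      by (simp add: stable_def)
  qed
qed

lemma ST_prof_act:
  assumes \<phi>: "\<phi> \<in> Gstar n"
  shows "ST n (prof_act \<phi> p) = match_act \<phi> ` ST n p"
proof
  show "match_act \<phi> ` ST n p \<subseteq> ST n (prof_act \<phi> p)"
    using \<phi> by (auto simp: ST_def matchings_match_act stable_match_act)
next
  have bij: "bij \<phi>"
    using \<phi> by (blast intro: Gstar_permutes permutes_bij)
  show "ST n (prof_act \<phi> p) \<subseteq> match_act \<phi> ` ST n p"
  proof
    fix \<nu> assume "\<nu> \<in> ST n (prof_act \<phi> p)"
    then have "match_act (inv \<phi>) \<nu> \<in> ST n (prof_act (inv \<phi>) (prof_act \<phi> p))"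
      using Gstar_inv[OF \<phi>] by (auto simp: ST_def matchings_match_act stable_match_act)
    then have "match_act (inv \<phi>) \<nu> \<in> ST n p"
      using bij by (simp add: prof_act_inv_cancel)
    then show "\<nu> \<in> match_act \<phi> ` ST n p"
      using match_act_inv_cancel[OF bij] by (metis image_eqI)
  qed
qed

lemma rank_sums_prof_act:
  assumes \<phi>: "\<phi> \<in> Gstar n"
  shows "(wsum n (prof_act \<phi> p) (match_act \<phi> \<mu>) = wsum n p \<mu>
            \<and> msum n (prof_act \<phi> p) (match_act \<phi> \<mu>) = msum n p \<mu>)
       \<or> (wsum n (prof_act \<phi> p) (match_act \<phi> \<mu>) = msum n p \<mu>
            \<and> msum n (prof_act \<phi> p) (match_act \<phi> \<mu>) = wsum n p \<mu>)"
proof -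
  have inj: "inj \<phi>"
    using \<phi> by (rule Gstar_inj)
  note wsum_act = sum_Rank_act[OF inj, where A = "Wset n" and B = "Mset n" and p = p and \<mu> = \<mu>]
  note msum_act = sum_Rank_act[OF inj, where A = "Mset n" and B = "Wset n" and p = p and \<mu> = \<mu>]
  from \<phi> wsum_act msum_act show ?thesis
    by (cases rule: Gstar_cases) (simp_all add: wsum_def msum_def)
qed

lemma delta_prof_act: "\<phi> \<in> Gstar n \<Longrightarrow> delta n (prof_act \<phi> p) (match_act \<phi> \<mu>) = delta n p \<mu>"
  using rank_sums_prof_act[of \<phi> n p \<mu>] by (auto simp: delta_def)

lemma egal_prof_act: "\<phi> \<in> Gstar n \<Longrightarrow> egal n (prof_act \<phi> p) (match_act \<phi> \<mu>) = egal n p \<mu>"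
  using rank_sums_prof_act[of \<phi> n p \<mu>] by (auto simp: egal_def)

theorem proposition10:
  fixes n :: nat
  assumes "n \<ge> 2"
  shows "symmetric_mech n (SE n) \<and> symmetric_mech n (ES n)"
proof -
  have "SE n (prof_act \<phi> p) = match_act \<phi> ` SE n p" if "\<phi> \<in> Gstar n" for \<phi> p
    unfolding SE_def ST_prof_act[OF that]
    by (rule argmin_image) (rule delta_prof_act[OF that])
  moreover have "ES n (prof_act \<phi> p) = match_act \<phi> ` ES n p" if "\<phi> \<in> Gstar n" for \<phi> p
    unfolding ES_def ST_prof_act[OF that]
    by (rule argmin_image) (rule egal_prof_act[OF that])
  ultimately show ?thesis
    by (simp add: symmetric_mech_def)
qed

end
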